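(* Let $n\ge 1$, $k\ge 1$, and let $\mathcal P(n,1,1)$ be the set of lattice paths with steps $U=(1,1)$ and $D=(1,-1)$ from $(0,0)$ to $(2n+1,1)$. For each $j=1,2,\dots,2n+1$, the number of paths in $\mathcal P(n,1,1)$ with exactly $k$ circular peaks and exactly $j$ vertices on or below the $x$-axis is independent of $j$ and equals $$\frac{1}{2n+1}\left(\binom{n}{k-1}\binom{n}{k}+\binom{n+1}{k}\binom{n-1}{k-1}\right).$$
   Context: A peak of a path is an occurrence of two consecutive steps $UD$. The circular peaks of a path $p\in\mathcal P(n,1,1)$ are all its peaks, together with its initial vertex in the case that $p$ starts with a down step and ends with an up step. A vertex is on or below the $x$-axis if its $y$-coordinate is $\le 0$. *)

theory Defs
  imports Complex_Main
begin

text \<open>A lattice path is a list of steps; True = U = (1,1), False = D = (1,-1).\<close>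

definition step_val :: "bool \<Rightarrow> int" where
  "step_val s = (if s then 1 else -1)"

text \<open>y-coordinate of the i-th vertex (vertex i has x-coordinate i, 0 <= i <= length p).\<close>
definition height :: "bool list \<Rightarrow> nat \<Rightarrow> int" where
  "height p i = sum_list (map step_val (take i p))"

text \<open>P(n,1,1): paths from (0,0) to (2n+1,1): 2n+1 steps, n+1 of them U.\<close>
definition paths_P :: "nat \<Rightarrow> bool list set" where
  "paths_P n = {p. length p = 2*n+1 \<and> length (filter id p) = n+1}"

definition peaks :: "bool list \<Rightarrow> nat" where
  "peaks p = card {i. Suc i < length p \<and> p ! i \<and> \<not> p ! Suc i}"

text \<open>Circular peaks: all peaks, plus the initial vertex if p starts with D and ends with U.\<close>
definition circ_peaks :: "bool list \<Rightarrow> nat" where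
  "circ_peaks p = peaks p + (if p \<noteq> [] \<and> \<not> hd p \<and> last p then 1 else 0)"

definition low_vertices :: "bool list \<Rightarrow> nat" where
  "low_vertices p = card {i. i \<le> length p \<and> height p i \<le> 0}"

end

(*
  Rotating a path of P(n,1,1) cyclically yields again a path of P(n,1,1) with the same number of
  circular peaks.  By a cycle-lemma argument, for each j exactly one of the 2n+1 rotations of a path
  has j vertices on or below the x-axis: ranking the vertices r by (2n+1) * height r - r, the
  rotation starting at vertex s has as many low vertices as s has rank.  Hence the count in question
  is 1/(2n+1) of the number of paths with k circular peaks.  The latter is found by double counting
  pairs (path, circular peak at its initial vertex): a rotation starting at a circular peak begins
  with D and ends with U, so it has the form D^y1 U^x1 ... D^yk U^xk, i.e. it is a pair of
  compositions of n and n+1 into k parts, of which there are C(n-1,k-1) * C(n,k-1).  Dividing by k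
  via k C(n,k) = n C(n-1,k-1) and k C(n+1,k) = (n+1) C(n,k-1) gives the stated formula.
*)

theory Submission
  imports Defs
begin

fun peak_count :: "bool list \<Rightarrow> nat" where
  "peak_count (a # b # r) = (if a \<and> \<not> b then 1 else 0) + peak_count (b # r)"
| "peak_count _ = 0"

lemma peaks_eq_peak_count: "peaks p = peak_count p"
proof (induction p rule: peak_count.induct)
  case (1 a b r)
  have "{i. Suc i < length (a # b # r) \<and> (a # b # r) ! i \<and> \<not> (a # b # r) ! Suc i}
      = (if a \<and> \<not> b then {0} else {}) \<union> Suc ` {i. Suc i < length (b # r) \<and> (b # r) ! i \<and> \<not> (b # r) ! Suc i}"
    by (rule set_eqI) (auto simp: image_iff gr0_conv_Suc less_Suc_eq_0_disj nth_Cons')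
  then show ?case
    using 1 by (simp add: peaks_def card_Un_disjoint card_image)
qed (auto simp: peaks_def)

lemma peak_count_Cons:
  "peak_count (a # v) = (if v \<noteq> [] \<and> a \<and> \<not> hd v then 1 else 0) + peak_count v"
  by (cases v) auto

lemma peak_count_append:
  "peak_count (u @ v) = peak_count u + peak_count v + (if u \<noteq> [] \<and> v \<noteq> [] \<and> last u \<and> \<not> hd v then 1 else 0)"
  by (induction u rule: peak_count.induct) (auto simp: peak_count_Cons)

lemma peak_count_replicate: "peak_count (replicate n c) = 0"
proof (induction n)
  case (Suc n)
  then show ?case by (cases n) (auto simp: peak_count_Cons)
qed simp

lemma circ_peaks_eq_peak_count:
  "circ_peaks p = peak_count p + (if p \<noteq> [] \<and> \<not> hd p \<and> last p then 1 else 0)"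
  by (simp add: circ_peaks_def peaks_eq_peak_count)

lemma circ_peaks_rotate1: "circ_peaks (rotate1 p) = circ_peaks p"
proof (cases p)
  case (Cons a w)
  then show ?thesis
    using peak_count_append [of "[a]" w] peak_count_append [of w "[a]"]
    by (cases "w = []") (auto simp: circ_peaks_eq_peak_count)
qed simp

lemma circ_peaks_rotate: "circ_peaks (rotate s p) = circ_peaks p"
  by (induction s) (auto simp: circ_peaks_rotate1)

lemma rotate1_in_paths_P: "p \<in> paths_P n \<Longrightarrow> rotate1 p \<in> paths_P n"
  by (cases p) (auto simp: paths_P_def)

lemma rotate_in_paths_P: "p \<in> paths_P n \<Longrightarrow> rotate s p \<in> paths_P n"
  by (induction s) (auto simp: rotate1_in_paths_P)

lemma finite_paths_P: "finite (paths_P n)"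
proof (rule finite_subset)
  show "paths_P n \<subseteq> {xs. set xs \<subseteq> UNIV \<and> length xs = 2 * n + 1}"
    by (auto simp: paths_P_def)
  show "finite {xs :: bool list. set xs \<subseteq> UNIV \<and> length xs = 2 * n + 1}"
    by (rule finite_lists_length_eq) simp
qed

lemma sum_card_rotations:
  assumes "finite X" and rotate_closed: "\<And>p s. p \<in> X \<Longrightarrow> rotate s p \<in> X"
  shows "(\<Sum>p\<in>X. card {s\<in>{..<L}. \<Phi> (rotate s p)}) = L * card {q\<in>X. \<Phi> q}"
proof -
  have inj: "inj (rotate s)" for s :: nat
    unfolding rotate_def by (intro inj_fn inj_rotate1)
  have card_rotated: "card (X \<inter> {p. \<Phi> (rotate s p)}) = card {q\<in>X. \<Phi> q}" for s
  proof -
    have "rotate s ` X = X"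
      using assms by (intro endo_inj_surj) (auto intro: inj_on_subset [OF inj])
    then have "rotate s ` (X \<inter> {p. \<Phi> (rotate s p)}) = {q\<in>X. \<Phi> q}"
      by auto
    moreover have "inj_on (rotate s) (X \<inter> {p. \<Phi> (rotate s p)})"
      using inj by (rule inj_on_subset) simp
    ultimately show ?thesis
      using card_image by fastforce
  qed
  have "(\<Sum>p\<in>X. card {s\<in>{..<L}. \<Phi> (rotate s p)}) = (\<Sum>p\<in>X. \<Sum>s<L. of_bool (\<Phi> (rotate s p)))"
    by (simp add: Int_def)
  also have "\<dots> = (\<Sum>s<L. \<Sum>p\<in>X. of_bool (\<Phi> (rotate s p)))"
    by (rule sum.swap)
  also have "\<dots> = L * card {q\<in>X. \<Phi> q}"
    using \<open>finite X\<close> by (simp add: card_rotated)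
  finally show ?thesis .
qed

lemma bij_betw_rank:
  fixes key :: "'a \<Rightarrow> 'b::linorder"
  assumes "finite A" and "inj_on key A"
  shows "bij_betw (\<lambda>s. card {r\<in>A. key r \<le> key s}) A {1..card A}"
proof -
  define rank where "rank s = card {r\<in>A. key r \<le> key s}" for s
  have rank_less: "rank a < rank b" if "a \<in> A" "b \<in> A" "key a < key b" for a b
  proof -
    have "{r\<in>A. key r \<le> key a} \<subset> {r\<in>A. key r \<le> key b}"
      using that by force
    then show ?thesis
      unfolding rank_def using \<open>finite A\<close> by (intro psubset_card_mono) auto
  qed
  have "inj_on rank A"
  proof (rule inj_onI)
    fix a b assume "a \<in> A" "b \<in> A" "rank a = rank b"
    then show "a = b"
      using rank_less [of a b] rank_less [of b a] inj_onD [OF \<open>inj_on key A\<close>, of a b]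
      by (metis less_irrefl neq_iff)
  qed
  moreover have "rank ` A \<subseteq> {1..card A}"
  proof
    fix x assume "x \<in> rank ` A"
    then obtain s where "s \<in> A" "x = rank s" by blast
    moreover have "rank s \<le> card A"
      unfolding rank_def using \<open>finite A\<close> by (intro card_mono) auto
    moreover have "rank s \<noteq> 0"
      unfolding rank_def using \<open>finite A\<close> \<open>s \<in> A\<close> by auto
    ultimately show "x \<in> {1..card A}" by simp
  qed
  ultimately have "bij_betw rank A {1..card A}"
    using \<open>finite A\<close> by (simp add: bij_betw_def card_image card_subset_eq)
  then show ?thesis
    unfolding rank_def .
qed

lemma card_rank_eq:
  fixes key :: "'a \<Rightarrow> 'b::linorder"
  assumes "finite A" and "inj_on key A" and "j \<in> {1..card A}"
  shows "card {s\<in>A. card {r\<in>A. key r \<le> key s} = j} = 1"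
proof -
  have bij: "bij_betw (\<lambda>s. card {r\<in>A. key r \<le> key s}) A {1..card A}"
    using assms by (intro bij_betw_rank)
  then have "j \<in> (\<lambda>s. card {r\<in>A. key r \<le> key s}) ` A"
    using bij_betw_imp_surj_on [OF bij] assms(3) by (simp only:)
  then obtain s where s: "s \<in> A" "card {r\<in>A. key r \<le> key s} = j"
    by blast
  moreover have "t = s" if "t \<in> A" "card {r\<in>A. key r \<le> key t} = j" for t
    using inj_onD [OF bij_betw_imp_inj_on [OF bij], of t s] that s by simp
  ultimately have "{s\<in>A. card {r\<in>A. key r \<le> key s} = j} = {s}"
    by blast
  then show ?thesis by simp
qed

lemma height_length_paths_P:
  assumes "p \<in> paths_P n"
  shows "height p (length p) = 1"
proof -
  have "sum_list (map step_val q) = int (length (filter id q)) - int (length (filter Not q))" for q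
    by (induction q) (auto simp: step_val_def)
  moreover have "length (filter id p) + length (filter Not p) = 2 * n + 1"
    using assms sum_length_filter_compl [of id p] by (auto simp: paths_P_def comp_def)
  ultimately show ?thesis
    using assms by (auto simp: height_def paths_P_def)
qed

lemma height_rotate:
  assumes "s < length p" and "i < length p"
  shows "height (rotate s p) i =
    (if s + i < length p then height p (s + i) else height p (s + i - length p) + height p (length p))
      - height p s"
proof -
  have rotate_eq: "rotate s p = drop s p @ take s p"
    using rotate_drop_take [of s p] assms by simp
  have height_add: "height p (s + m) = height p s + sum_list (map step_val (take m (drop s p)))" for m
    by (simp add: height_def take_add)
  show ?thesis
  proof (cases "s + i < length p")
    case True
    then have "take i (rotate s p) = take i (drop s p)"
      by (simp add: rotate_eq)
    then show ?thesis
      using True height_add [of i] by (simp add: height_def)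
  next
    case False
    then have "take i (rotate s p) = drop s p @ take (s + i - length p) p"
      using assms by (simp add: rotate_eq add.commute)
    moreover have "height p (length p) = height p s + sum_list (map step_val (drop s p))"
      using height_add [of "length p - s"] assms by simp
    ultimately show ?thesis
      using False by (simp add: height_def)
  qed
qed

lemma add_indicator_le_iff_scaled_le:
  fixes a b :: int and L r s :: nat
  assumes "r < L" and "s < L"
  shows "a + (if r < s then 1 else 0) - b \<le> 0 \<longleftrightarrow> int L * a - int r \<le> int L * b - int s"
proof -
  have "int L * a + int L \<le> int L * b" if "a < b" for a b :: int
    using mult_left_mono [of "a + 1" b "int L"] that by (simp add: algebra_simps)
  then consider "a < b" "int L * a + int L \<le> int L * b" | "a = b"
    | "b < a" "int L * b + int L \<le> int L * a"
    by (metis linorder_neqE)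
  then show ?thesis
    by cases (use assms in auto)
qed

text \<open>Vertex i of \<open>rotate s p\<close> is low iff the corresponding vertex r of p satisfies
  height r + [r < s] \<le> height s, the +1 coming from wrapping around past the endpoint of height 1;
  scaling by the length and subtracting r turns this into a comparison of injective keys.\<close>

definition low_key :: "bool list \<Rightarrow> nat \<Rightarrow> int" where
  "low_key p r = int (length p) * height p r - int r"

lemma inj_on_low_key: "inj_on (low_key p) {..<length p}"
proof (rule inj_onI)
  fix r s assume "r \<in> {..<length p}" "s \<in> {..<length p}" "low_key p r = low_key p s"
  then show "r = s"
    using add_indicator_le_iff_scaled_le [of r "length p" s "height p r" "height p s"]
      add_indicator_le_iff_scaled_le [of s "length p" r "height p s" "height p r"]
    unfolding low_key_def by (auto split: if_splits)
qed

lemma low_vertex_rotate_iff: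
  assumes "p \<in> paths_P n" and "s < length p" and "i < length p"
  shows "height (rotate s p) i \<le> 0 \<longleftrightarrow>
    low_key p (if s + i < length p then s + i else s + i - length p) \<le> low_key p s"
proof -
  define r where "r = (if s + i < length p then s + i else s + i - length p)"
  have "r < length p"
    using assms(2,3) by (auto simp: r_def)
  have "height (rotate s p) i = height p r + (if r < s then 1 else 0) - height p s"
  proof (cases "s + i < length p")
    case True
    then show ?thesis
      using height_rotate [OF assms(2,3)] by (simp add: r_def)
  next
    case False
    then have "r < s"
      using assms(3) by (simp add: r_def)
    then show ?thesis
      using False height_rotate [OF assms(2,3)] height_length_paths_P [OF assms(1)] by (simp add: r_def)
  qed
  then show ?thesis
    unfolding r_def [symmetric] low_key_def
    using add_indicator_le_iff_scaled_le [OF \<open>r < length p\<close> assms(2)] by simp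
qed

lemma low_vertices_rotate:
  assumes p: "p \<in> paths_P n" and s: "s < length p"
  shows "low_vertices (rotate s p) = card {r\<in>{..<length p}. low_key p r \<le> low_key p s}"
proof -
  define L where "L = length p"
  define g where "g i = (if s + i < L then s + i else s + i - L)" for i
  have "height (rotate s p) L = 1"
    using height_length_paths_P [OF rotate_in_paths_P [OF p]] by (simp add: L_def)
  then have "{i. i \<le> length (rotate s p) \<and> height (rotate s p) i \<le> 0}
      = {i\<in>{..<L}. height (rotate s p) i \<le> 0}"
    by (auto simp: L_def le_less)
  also have "\<dots> = {i\<in>{..<L}. low_key p (g i) \<le> low_key p s}"
    using low_vertex_rotate_iff [OF p s] by (auto simp: L_def g_def)
  finally have "low_vertices (rotate s p) = card {i\<in>{..<L}. low_key p (g i) \<le> low_key p s}"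
    by (simp add: low_vertices_def)
  also have "\<dots> = card (g ` {i\<in>{..<L}. low_key p (g i) \<le> low_key p s})"
    by (rule card_image [symmetric]) (auto simp: g_def inj_on_def split: if_splits)
  also have "g ` {i\<in>{..<L}. low_key p (g i) \<le> low_key p s} = {r\<in>{..<L}. low_key p r \<le> low_key p s}"
  proof (rule set_eqI, rule iffI)
    fix r assume "r \<in> {r\<in>{..<L}. low_key p r \<le> low_key p s}"
    moreover define i where "i = (if s \<le> r then r - s else r + L - s)"
    ultimately have "i < L" "g i = r" "low_key p (g i) \<le> low_key p s"
      using s by (auto simp: i_def g_def L_def)
    then show "r \<in> g ` {i\<in>{..<L}. low_key p (g i) \<le> low_key p s}"
      by force
  qed (use s in \<open>auto simp: g_def L_def\<close>)
  finally show ?thesis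
    by (simp add: L_def)
qed

lemma card_rotations_peak_start:
  "card {s\<in>{..<length p}. \<not> hd (rotate s p) \<and> last (rotate s p)} = circ_peaks p"
proof (cases "p = []")
  case False
  define L where "L = length p"
  have L_pos: "L > 0"
    using False by (simp add: L_def)
  have hd_rotate: "hd (rotate s p) = p ! s" if "s < L" for s
    using hd_rotate_conv_nth [OF False, of s] that by (simp add: L_def)
  have last_rotate: "last (rotate s p) = p ! (if s = 0 then L - 1 else s - 1)" if "s < L" for s
  proof -
    have "last (rotate s p) = p ! ((s + (L - 1)) mod L)"
      using False nth_rotate [of "L - 1" p s] by (simp add: last_conv_nth L_def)
    also have "(s + (L - 1)) mod L = (if s = 0 then L - 1 else s - 1)"
      using that L_pos by (cases s) auto
    finally show ?thesis .
  qed
  define A where "A = {i. Suc i < L \<and> p ! i \<and> \<not> p ! Suc i}"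
  have "{s\<in>{..<L}. \<not> hd (rotate s p) \<and> last (rotate s p)}
      = (if \<not> p ! 0 \<and> p ! (L - 1) then {0} else {}) \<union> Suc ` A"
  proof (rule set_eqI)
    fix s
    show "s \<in> {s\<in>{..<L}. \<not> hd (rotate s p) \<and> last (rotate s p)} \<longleftrightarrow>
        s \<in> (if \<not> p ! 0 \<and> p ! (L - 1) then {0} else {}) \<union> Suc ` A"
      using hd_rotate [of s] last_rotate [of s] L_pos by (cases s) (auto simp: A_def)
  qed
  moreover have "finite A"
    by (rule finite_subset [of _ "{..<L}"]) (auto simp: A_def)
  ultimately have "card {s\<in>{..<L}. \<not> hd (rotate s p) \<and> last (rotate s p)}
      = (if \<not> p ! 0 \<and> p ! (L - 1) then 1 else 0) + card A"
    by (simp add: card_Un_disjoint card_image)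
  moreover have "peaks p = card A"
    by (simp add: peaks_def A_def L_def)
  ultimately show ?thesis
    using False by (simp add: circ_peaks_def hd_conv_nth last_conv_nth L_def)
qed (simp add: circ_peaks_def peaks_def)

lemma card_rotations_low_vertices:
  assumes "p \<in> paths_P n" and "1 \<le> j" and "j \<le> 2 * n + 1"
  shows "card {s\<in>{..<2 * n + 1}. low_vertices (rotate s p) = j} = 1"
proof -
  have "length p = 2 * n + 1"
    using assms(1) by (simp add: paths_P_def)
  then have "{s\<in>{..<2 * n + 1}. low_vertices (rotate s p) = j}
      = {s\<in>{..<length p}. card {r\<in>{..<length p}. low_key p r \<le> low_key p s} = j}"
    using low_vertices_rotate [OF assms(1)] by auto
  also have "card \<dots> = 1"
    using assms \<open>length p = 2 * n + 1\<close> by (intro card_rank_eq inj_on_low_key) auto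
  finally show ?thesis .
qed

lemma card_eq_mult_card_low_vertices:
  assumes "X \<subseteq> paths_P n" and "\<And>p s. p \<in> X \<Longrightarrow> rotate s p \<in> X"
    and "1 \<le> j" and "j \<le> 2 * n + 1"
  shows "card X = (2 * n + 1) * card {p\<in>X. low_vertices p = j}"
proof -
  have "finite X"
    using assms(1) finite_paths_P by (rule finite_subset)
  have "(\<Sum>p\<in>X. card {s\<in>{..<2 * n + 1}. low_vertices (rotate s p) = j}) = (\<Sum>p\<in>X. 1)"
    using assms card_rotations_low_vertices by (intro sum.cong) auto
  then have "card X = (\<Sum>p\<in>X. card {s\<in>{..<2 * n + 1}. low_vertices (rotate s p) = j})"
    by simp
  also have "\<dots> = (2 * n + 1) * card {p\<in>X. low_vertices p = j}"
    using \<open>finite X\<close> assms(2) by (rule sum_card_rotations)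
  finally show ?thesis .
qed

lemma mult_card_eq_card_peak_start:
  assumes "finite X" and "\<And>p s. p \<in> X \<Longrightarrow> rotate s p \<in> X"
    and "\<And>p. p \<in> X \<Longrightarrow> length p = L \<and> circ_peaks p = k"
  shows "k * card X = L * card {p\<in>X. \<not> hd p \<and> last p}"
proof -
  have "(\<Sum>p\<in>X. card {s\<in>{..<L}. \<not> hd (rotate s p) \<and> last (rotate s p)}) = (\<Sum>p\<in>X. k)"
    using assms(3) card_rotations_peak_start by (intro sum.cong) auto
  then have "k * card X = (\<Sum>p\<in>X. card {s\<in>{..<L}. \<not> hd (rotate s p) \<and> last (rotate s p)})"
    by (simp add: mult.commute)
  also have "\<dots> = L * card {p\<in>X. \<not> hd p \<and> last p}"
    using assms(1,2) by (rule sum_card_rotations)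
  finally show ?thesis .
qed

fun runs :: "nat list \<Rightarrow> nat list \<Rightarrow> bool list" where
  "runs (y # ys) (x # xs) = replicate y False @ replicate x True @ runs ys xs"
| "runs _ _ = []"

definition compositions :: "nat \<Rightarrow> nat \<Rightarrow> nat list set" where
  "compositions k a = {xs. length xs = k \<and> 0 \<notin> set xs \<and> sum_list xs = a}"

definition down_up_words :: "nat \<Rightarrow> nat \<Rightarrow> nat \<Rightarrow> bool list set" where
  "down_up_words b a m = {w. w \<noteq> [] \<and> \<not> hd w \<and> last w \<and>
     length (filter Not w) = b \<and> length (filter id w) = a \<and> peak_count w = m}"

lemma compositions_eq_image_map_Suc:
  "compositions k a = map Suc ` {l. length l = k \<and> sum_list l + k = a}"
proof -
  have sum_map_Suc: "sum_list (map Suc l) = sum_list l + length l" for l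
    by (induction l) auto
  show ?thesis
  proof (rule set_eqI, rule iffI)
    fix xs assume xs: "xs \<in> compositions k a"
    define l where "l = map (\<lambda>x. x - 1) xs"
    have "0 \<notin> set xs"
      using xs by (simp add: compositions_def)
    then have "Suc (x - 1) = x" if "x \<in> set xs" for x
      using that by (cases x) auto
    then have "xs = map Suc l"
      unfolding l_def map_map by (intro map_idI [symmetric]) simp
    moreover have "length l = k \<and> sum_list l + k = a"
      using xs sum_map_Suc [of l] arg_cong [OF calculation, of sum_list]
      by (simp add: compositions_def l_def)
    ultimately show "xs \<in> map Suc ` {l. length l = k \<and> sum_list l + k = a}"
      by blast
  qed (auto simp: compositions_def sum_map_Suc)
qed

lemma card_compositions:
  assumes "k \<ge> 1" and "a \<ge> 1"
  shows "card (compositions k a) = (a - 1) choose (k - 1)"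
proof (cases "k \<le> a")
  case True
  have "{l. length l = k \<and> sum_list l + k = a} = {l. length l = k \<and> sum_list l = a - k}"
    using True by auto
  then have "card (compositions k a) = card {l::nat list. length l = k \<and> sum_list l = a - k}"
    by (simp add: compositions_eq_image_map_Suc card_image inj_on_subset [OF inj_mapI [OF inj_Suc]])
  also have "\<dots> = (a - 1) choose (a - k)"
    using True assms by (simp add: card_length_sum_list)
  also have "\<dots> = (a - 1) choose (k - 1)"
    using True assms binomial_symmetric [of "k - 1" "a - 1"] by simp
  finally show ?thesis .
next
  case False
  then show ?thesis
    using assms by (simp add: compositions_eq_image_map_Suc)
qed

lemma peak_count_block:
  assumes "y > 0" and "x > 0" and "r = [] \<or> \<not> hd r"
  shows "peak_count (replicate y False @ replicate x True @ r) = peak_count r + (if r = [] then 0 else 1)"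
  using assms by (auto simp: peak_count_append peak_count_replicate)

lemma length_filter_runs:
  assumes "length ys = length xs"
  shows "length (filter Not (runs ys xs)) = sum_list ys \<and> length (filter id (runs ys xs)) = sum_list xs"
  using assms by (induction ys xs rule: runs.induct) auto

lemma runs_eq_Nil_iff:
  assumes "length ys = length xs" and "0 \<notin> set ys"
  shows "runs ys xs = [] \<longleftrightarrow> ys = []"
  using assms by (induction ys xs rule: runs.induct) auto

lemma hd_runs:
  assumes "0 \<notin> set ys" and "runs ys xs \<noteq> []"
  shows "\<not> hd (runs ys xs)"
  using assms by (induction ys xs rule: runs.induct) auto

lemma last_runs:
  assumes "length ys = length xs" and "0 \<notin> set ys" and "0 \<notin> set xs" and "ys \<noteq> []"
  shows "last (runs ys xs)"
  using assms by (induction ys xs rule: runs.induct) (auto simp: last_append runs_eq_Nil_iff)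

lemma peak_count_runs:
  assumes "length ys = length xs" and "0 \<notin> set ys" and "0 \<notin> set xs"
  shows "peak_count (runs ys xs) = length ys - 1"
  using assms
proof (induction ys xs rule: runs.induct)
  case (1 y ys x xs)
  then have hyps: "length ys = length xs" "0 \<notin> set ys" "0 \<notin> set xs" "y > 0" "x > 0"
    by auto
  show ?case
  proof (cases "ys = []")
    case True
    then show ?thesis
      using hyps by (simp add: peak_count_append peak_count_replicate)
  next
    case False
    then have "runs ys xs \<noteq> []" and "\<not> hd (runs ys xs)"
      using hd_runs [OF hyps(2)] runs_eq_Nil_iff [OF hyps(1-2)] by auto
    then have "peak_count (runs (y # ys) (x # xs)) = peak_count (runs ys xs) + 1"
      using hyps(4,5) by (simp add: peak_count_block)
    then show ?thesis
      using "1.IH" [OF hyps(1-3)] False by simp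
  qed
qed auto

lemma block_prefix_cancel:
  assumes "x > 0" and "x' > 0" and "r = [] \<or> \<not> hd r" and "r' = [] \<or> \<not> hd r'"
    and eq: "replicate y False @ replicate x True @ r = replicate y' False @ replicate x' True @ r'"
  shows "y = y' \<and> x = x' \<and> r = r'"
proof -
  have "length (takeWhile Not (replicate y False @ replicate x True @ r)) = y"
    using assms(1) by (auto simp: takeWhile_append)
  moreover have "length (takeWhile Not (replicate y' False @ replicate x' True @ r')) = y'"
    using assms(2) by (auto simp: takeWhile_append)
  ultimately have "y = y'"
    using eq by simp
  with eq have eq': "replicate x True @ r = replicate x' True @ r'"
    by simp
  have "length (takeWhile id (replicate x True @ r)) = x"
    using assms(3) by (auto simp: takeWhile_append takeWhile_eq_Nil_iff)
  moreover have "length (takeWhile id (replicate x' True @ r')) = x'"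
    using assms(4) by (auto simp: takeWhile_append takeWhile_eq_Nil_iff)
  ultimately have "x = x'"
    using eq' by simp
  with \<open>y = y'\<close> eq' show ?thesis
    by simp
qed

lemma inj_on_runs:
  "inj_on (\<lambda>(ys, xs). runs ys xs) {(ys, xs). length ys = length xs \<and> 0 \<notin> set ys \<and> 0 \<notin> set xs}"
proof -
  have "ys = ys' \<and> xs = xs'"
    if "length ys = length xs" "0 \<notin> set ys" "0 \<notin> set xs"
      "length ys' = length xs'" "0 \<notin> set ys'" "0 \<notin> set xs'" "runs ys xs = runs ys' xs'"
    for ys xs ys' xs'
    using that
  proof (induction ys xs arbitrary: ys' xs' rule: runs.induct)
    case (1 y ys x xs)
    then obtain y' ys'' x' xs'' where cons: "ys' = y' # ys''" "xs' = x' # xs''"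
      using runs_eq_Nil_iff [of ys' xs'] by (cases ys'; cases xs') auto
    have "runs ys xs = [] \<or> \<not> hd (runs ys xs)" "runs ys'' xs'' = [] \<or> \<not> hd (runs ys'' xs'')"
      using 1 cons hd_runs [of ys xs] hd_runs [of ys'' xs''] by auto
    then have "y = y' \<and> x = x' \<and> runs ys xs = runs ys'' xs''"
      using 1 cons by (intro block_prefix_cancel) auto
    then show ?case
      using "1.IH" [of ys'' xs''] 1 cons by auto
  qed (use runs_eq_Nil_iff in fastforce)+
  then show ?thesis
    by (auto intro: inj_onI)
qed

lemma down_up_word_decomposition:
  assumes "w \<noteq> []" and "\<not> hd w" and "last w"
  obtains y x r where "y > 0" and "x > 0" and "r = [] \<or> \<not> hd r \<and> last r"
    and "w = replicate y False @ replicate x True @ r"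
proof -
  define y where "y = length (takeWhile Not w)"
  define w' where "w' = dropWhile Not w"
  define x where "x = length (takeWhile id w')"
  define r where "r = dropWhile id w'"
  have w: "w = replicate y False @ w'"
    unfolding y_def w'_def by (subst replicate_length_same) (auto dest: set_takeWhileD)
  have w': "w' = replicate x True @ r"
    unfolding x_def r_def by (subst replicate_length_same) (auto dest: set_takeWhileD)
  have "y > 0"
    using assms(1,2) unfolding y_def by (cases w) auto
  moreover have "w' \<noteq> []"
    using assms(1,3) w by (cases "w' = []") auto
  then have "hd w'"
    using hd_dropWhile [of Not w] unfolding w'_def by simp
  with \<open>w' \<noteq> []\<close> have "x > 0"
    unfolding x_def by (cases w') auto
  moreover have "r \<noteq> [] \<Longrightarrow> \<not> hd r"
    using hd_dropWhile [of id w'] unfolding r_def by simp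
  moreover have "r \<noteq> [] \<Longrightarrow> last r"
    using assms(3) unfolding w w' by simp
  ultimately show ?thesis
    using that w w' by blast
qed

lemma down_up_words_subset_runs_image:
  "down_up_words b a m \<subseteq> (\<lambda>(ys, xs). runs ys xs) ` (compositions (Suc m) b \<times> compositions (Suc m) a)"
proof
  fix w assume "w \<in> down_up_words b a m"
  then show "w \<in> (\<lambda>(ys, xs). runs ys xs) ` (compositions (Suc m) b \<times> compositions (Suc m) a)"
  proof (induction "length w" arbitrary: w b a m rule: less_induct)
    case less
    then have "w \<noteq> []" "\<not> hd w" "last w"
      by (auto simp: down_up_words_def)
    then obtain y x r where yxr: "y > 0" "x > 0" "r = [] \<or> \<not> hd r \<and> last r"
        and w: "w = replicate y False @ replicate x True @ r"
      by (rule down_up_word_decomposition)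
    have peak_count_w: "peak_count w = peak_count r + (if r = [] then 0 else 1)"
      unfolding w using yxr by (intro peak_count_block) auto
    have counts: "b = y + length (filter Not r)" "a = x + length (filter id r)"
      using less.prems unfolding w by (auto simp: down_up_words_def)
    show ?case
    proof (cases "r = []")
      case True
      then have "([y], [x]) \<in> compositions (Suc m) b \<times> compositions (Suc m) a" and "w = runs [y] [x]"
        using less.prems peak_count_w counts yxr w by (auto simp: down_up_words_def compositions_def)
      then show ?thesis
        by force
    next
      case False
      then have "r \<in> down_up_words (b - y) (a - x) (m - 1)" and "m \<ge> 1"
        using less.prems peak_count_w counts yxr by (auto simp: down_up_words_def)
      moreover have "length r < length w"
        using yxr(1) w by simp
      ultimately obtain ys xs where ys: "ys \<in> compositions m (b - y)"
          and xs: "xs \<in> compositions m (a - x)" and "r = runs ys xs"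
        using less.hyps by fastforce
      then have "(y # ys, x # xs) \<in> compositions (Suc m) b \<times> compositions (Suc m) a"
        using yxr(1,2) counts by (auto simp: compositions_def)
      moreover have "w = runs (y # ys) (x # xs)"
        by (simp add: w \<open>r = runs ys xs\<close>)
      ultimately show ?thesis
        by force
    qed
  qed
qed

lemma down_up_words_eq_runs_image:
  "down_up_words b a m = (\<lambda>(ys, xs). runs ys xs) ` (compositions (Suc m) b \<times> compositions (Suc m) a)"
proof
  show "(\<lambda>(ys, xs). runs ys xs) ` (compositions (Suc m) b \<times> compositions (Suc m) a) \<subseteq> down_up_words b a m"
  proof clarify
    fix ys xs assume "ys \<in> compositions (Suc m) b" "xs \<in> compositions (Suc m) a"
    then have hyps: "length ys = length xs" "0 \<notin> set ys" "0 \<notin> set xs" "ys \<noteq> []"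
      and sums: "sum_list ys = b" "sum_list xs = a" "length ys = Suc m"
      by (auto simp: compositions_def)
    have "runs ys xs \<noteq> []"
      using runs_eq_Nil_iff [OF hyps(1,2)] hyps(4) by simp
    then show "runs ys xs \<in> down_up_words b a m"
      using hd_runs [OF hyps(2)] last_runs [OF hyps] peak_count_runs [OF hyps(1-3)]
        length_filter_runs [OF hyps(1)] sums
      by (simp add: down_up_words_def)
  qed
qed (rule down_up_words_subset_runs_image)

lemma card_down_up_words:
  "card (down_up_words b a m) = card (compositions (Suc m) b) * card (compositions (Suc m) a)"
proof -
  have "inj_on (\<lambda>(ys, xs). runs ys xs) (compositions (Suc m) b \<times> compositions (Suc m) a)"
    by (rule inj_on_subset [OF inj_on_runs]) (auto simp: compositions_def)
  then show ?thesis
    by (simp add: down_up_words_eq_runs_image card_image card_cartesian_product)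
qed

lemma peak_start_paths_eq_down_up_words:
  assumes "k \<ge> 1"
  shows "{p \<in> paths_P n. circ_peaks p = k \<and> \<not> hd p \<and> last p} = down_up_words n (n + 1) (k - 1)"
proof -
  have "length p = 2 * n + 1 \<longleftrightarrow> length (filter Not p) = n" if "length (filter id p) = n + 1" for p :: "bool list"
    using sum_length_filter_compl [of id p] that by (auto simp: comp_def)
  then show ?thesis
    using assms by (auto simp: paths_P_def down_up_words_def circ_peaks_eq_peak_count)
qed

lemma choose_product_identity:
  assumes "n \<ge> 1" and "k \<ge> 1"
  shows "k * ((n choose (k - 1)) * (n choose k) + ((n + 1) choose k) * ((n - 1) choose (k - 1)))
    = (2 * n + 1) * (((n - 1) choose (k - 1)) * (n choose (k - 1)))"
proof -
  have "k * ((n choose (k - 1)) * (n choose k) + ((n + 1) choose k) * ((n - 1) choose (k - 1)))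
      = (n choose (k - 1)) * (k * (n choose k)) + (k * ((n + 1) choose k)) * ((n - 1) choose (k - 1))"
    by (simp add: algebra_simps)
  also have "\<dots> = (n choose (k - 1)) * (n * ((n - 1) choose (k - 1)))
      + ((n + 1) * (n choose (k - 1))) * ((n - 1) choose (k - 1))"
    using assms times_binomial_minus1_eq [of k n] times_binomial_minus1_eq [of k "n + 1"] by simp
  also have "\<dots> = (2 * n + 1) * (((n - 1) choose (k - 1)) * (n choose (k - 1)))"
    by (simp add: algebra_simps)
  finally show ?thesis .
qed

lemma card_paths_circ_peaks_eq_mult_low_vertices:
  assumes "1 \<le> j" and "j \<le> 2 * n + 1"
  shows "card {p \<in> paths_P n. circ_peaks p = k}
    = (2 * n + 1) * card {p \<in> paths_P n. circ_peaks p = k \<and> low_vertices p = j}"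
proof -
  have "card {p \<in> paths_P n. circ_peaks p = k}
      = (2 * n + 1) * card {p \<in> {p \<in> paths_P n. circ_peaks p = k}. low_vertices p = j}"
    using assms by (intro card_eq_mult_card_low_vertices) (auto simp: rotate_in_paths_P circ_peaks_rotate)
  then show ?thesis
    by (simp add: conj_assoc)
qed

lemma mult_card_paths_circ_peaks:
  assumes "n \<ge> 1" and "k \<ge> 1"
  shows "k * card {p \<in> paths_P n. circ_peaks p = k} = (2 * n + 1) * (((n - 1) choose (k - 1)) * (n choose (k - 1)))"
proof -
  have "finite {p \<in> paths_P n. circ_peaks p = k}"
    using finite_paths_P by simp
  then have "k * card {p \<in> paths_P n. circ_peaks p = k}
      = (2 * n + 1) * card {p \<in> {p \<in> paths_P n. circ_peaks p = k}. \<not> hd p \<and> last p}"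
    by (rule mult_card_eq_card_peak_start)
      (auto simp: rotate_in_paths_P circ_peaks_rotate, simp add: paths_P_def)
  also have "{p \<in> {p \<in> paths_P n. circ_peaks p = k}. \<not> hd p \<and> last p} = down_up_words n (n + 1) (k - 1)"
    using peak_start_paths_eq_down_up_words [OF assms(2)] by auto
  finally show ?thesis
    using assms by (simp add: card_down_up_words card_compositions)
qed

theorem theorem8:
  fixes n k j :: nat
  assumes "n \<ge> 1" and "k \<ge> 1" and "1 \<le> j" and "j \<le> 2*n+1"
  shows "real (card {p \<in> paths_P n. circ_peaks p = k \<and> low_vertices p = j}) =
    (real (n choose (k-1)) * real (n choose k) + real ((n+1) choose k) * real ((n-1) choose (k-1)))
      / real (2*n+1)"
proof -
  define A where "A = card {p \<in> paths_P n. circ_peaks p = k \<and> low_vertices p = j}"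
  define C where "C = (n choose (k - 1)) * (n choose k) + ((n + 1) choose k) * ((n - 1) choose (k - 1))"
  have "k * ((2 * n + 1) * A) = k * C"
    using card_paths_circ_peaks_eq_mult_low_vertices [OF assms(3,4), of k]
      mult_card_paths_circ_peaks [OF assms(1,2)] choose_product_identity [OF assms(1,2)]
    by (simp add: A_def C_def)
  then have "real A * real (2 * n + 1) = real C"
    using assms(2) by (metis mult.commute mult_cancel_left not_one_le_zero of_nat_mult)
  then show ?thesis
    unfolding A_def C_def by (simp add: eq_divide_eq)
qed

end
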